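(* In the model and protocol $\mathrm{OciorABA}$ described in the context, with $n\ge 3t+1$, if all honest nodes input the same message $w$ and some honest node outputs a vector $v$ from the APVA instance, then $v[j]\neq 0$ for every $j\in[1:n]\setminus\mathcal F$.
   Context: Model: there are $n$ nodes $\mathrm{Node}_1,\dots,\mathrm{Node}_n$ in an asynchronous network (every message sent between honest nodes is eventually delivered, with arbitrary adversarial delay). An adaptive adversary may corrupt at most $t$ nodes in total; $\mathcal F\subseteq[1:n]$ denotes the set of dishonest nodes; $n\ge 3t+1$. The symbol $\bot$ denotes "missing"; for a vector $v\in\{0,1,\bot\}^n$ let $\mathcal M(v)=\{j\in[1:n]: v[j]\neq\bot\}$. Primitives used as black boxes: (RBC) For each $j\in[1:n]$ a reliable broadcast instance $\mathrm{RBC}_j$ with leader $\mathrm{Node}_j$, satisfying Consistency (two honest outputs are equal), Validity (if the leader is honest and inputs $w$, every honest node eventually outputs $w$), and Totality (if one honest node outputs a value, every honest node eventually outputs a value). (APVA) An asynchronous partial vector agreement instance: each honest $\mathrm{Node}_i$ holds an input vector $a_i\in\{0,1,\bot\}^n$, initially all $\bot$, whose entries may over time change from $\bot$ to a value in $\{0,1\}$ (and are then fixed); each node outputs at most one vector in $\{0,1,\bot\}^n$. It satisfies: Consistency (if an honest node outputs $v$, every honest node eventually outputs $v$); Validity (if an honest node outputs $v$, then for every $j$ with $v[j]\neq\bot$ some honest $\mathrm{Node}_i$ has input $a_i[j]=v[j]$, and $|\mathcal M(v)|\ge n-t$); Termination (if there is a set of at least $n-t$ positions at which all honest nodes have non-missing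 input entries, then every honest node eventually outputs a vector and terminates). (Erasure code) An $(n,t+1)$ erasure code: $\mathrm{Enc}(w)=(\mathrm{Enc}_1(w),\dots,\mathrm{Enc}_n(w))$ and $\mathrm{Dec}$ with $\mathrm{Dec}(\{\mathrm{Enc}_j(w)\}_{j\in K})=w$ for every $K\subseteq[1:n]$, $|K|=t+1$. Protocol $\mathrm{OciorABA}$, code for an honest $\mathrm{Node}_i$ with input message $w_i$: (1) Compute $(y^{(i)}_1,\dots,y^{(i)}_n)=\mathrm{Enc}(w_i)$ and input $y^{(i)}_i$ into $\mathrm{RBC}_i$ (as leader). (2) Upon delivery of $y^{(j)}_j$ from $\mathrm{RBC}_j$ (after step (1)), set $a_i[j]=1$ if $y^{(j)}_j=y^{(i)}_j$ and $a_i[j]=0$ otherwise, and pass $a_i[j]$ into APVA as the $j$-th entry of its input vector. (3) Upon APVA outputting $v$: let $S=\{j: v[j]=1\}$. If $|S|<t+1$, output a default value $\bot$ and terminate. Otherwise let $K$ be the $t+1$ smallest elements of $S$, wait for delivery of $y^{(j)}_j$ from $\mathrm{RBC}_j$ for all $j\in K$, output $\mathrm{Dec}(\{y^{(j)}_j\}_{j\in K})$ and terminate. *)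

theory Defs
  imports Main
begin

text \<open>Entries of APVA vectors: 0, 1, or missing (bot).\<close>
datatype tern = T0 | T1 | Bot

definition honest :: "nat \<Rightarrow> nat set \<Rightarrow> nat set" where
  "honest n F = {1..n} - F"

definition present :: "nat \<Rightarrow> (nat \<Rightarrow> tern) \<Rightarrow> nat set" where
  "present n v = {j \<in> {1..n}. v j \<noteq> Bot}"

definition erasure_code ::
  "nat \<Rightarrow> nat \<Rightarrow> ('m \<Rightarrow> nat \<Rightarrow> 'c) \<Rightarrow> (nat set \<Rightarrow> (nat \<Rightarrow> 'c) \<Rightarrow> 'm) \<Rightarrow> bool" where
  "erasure_code n t Enc Dec \<longleftrightarrow>
     (\<forall>w K. K \<subseteq> {1..n} \<longrightarrow> card K = t + 1 \<longrightarrow> Dec K (Enc w) = w)"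

text \<open>Reliable broadcast properties (eventual view of an execution).
  rbc i j = Some y: honest node i delivers y from RBC_j; ldr j: the input of the
  honest leader j.\<close>
definition rbc_props ::
  "nat \<Rightarrow> nat set \<Rightarrow> (nat \<Rightarrow> 'c) \<Rightarrow> (nat \<Rightarrow> nat \<Rightarrow> 'c option) \<Rightarrow> bool" where
  "rbc_props n F ldr rbc \<longleftrightarrow>
     (\<forall>j\<in>{1..n}. \<forall>i\<in>honest n F. \<forall>k\<in>honest n F. \<forall>y y'.
        rbc i j = Some y \<longrightarrow> rbc k j = Some y' \<longrightarrow> y = y') \<and>
     (\<forall>j\<in>honest n F. \<forall>i\<in>honest n F. rbc i j = Some (ldr j)) \<and>
     (\<forall>j\<in>{1..n}. (\<exists>i\<in>honest n F. rbc i j \<noteq> None) \<longrightarrow>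
        (\<forall>k\<in>honest n F. rbc k j \<noteq> None))"

text \<open>APVA properties. a i: (eventual) input vector of honest node i;
  out i = Some v: honest node i outputs v.\<close>
definition apva_props ::
  "nat \<Rightarrow> nat \<Rightarrow> nat set \<Rightarrow> (nat \<Rightarrow> nat \<Rightarrow> tern) \<Rightarrow> (nat \<Rightarrow> (nat \<Rightarrow> tern) option) \<Rightarrow> bool" where
  "apva_props n t F a out \<longleftrightarrow>
     (\<forall>i\<in>honest n F. \<forall>v. out i = Some v \<longrightarrow> (\<forall>k\<in>honest n F. out k = Some v)) \<and>
     (\<forall>i\<in>honest n F. \<forall>v. out i = Some v \<longrightarrow>
        (\<forall>j\<in>{1..n}. v j \<noteq> Bot \<longrightarrow> (\<exists>k\<in>honest n F. a k j = v j)) \<and>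
        card (present n v) \<ge> n - t) \<and>
     ((\<exists>S. S \<subseteq> {1..n} \<and> card S \<ge> n - t \<and>
          (\<forall>i\<in>honest n F. \<forall>j\<in>S. a i j \<noteq> Bot)) \<longrightarrow>
        (\<forall>i\<in>honest n F. out i \<noteq> None))"

text \<open>Steps (1)-(2) of OciorABA for honest node i with input winp i: the leader
  input of RBC_i is Enc_i(w_i), and a_i[j] is set by comparing the delivered
  symbol with the locally computed Enc_j(w_i).\<close>
definition ocior_steps ::
  "nat \<Rightarrow> nat set \<Rightarrow> ('m \<Rightarrow> nat \<Rightarrow> 'c) \<Rightarrow> (nat \<Rightarrow> 'm) \<Rightarrow> (nat \<Rightarrow> 'c)
   \<Rightarrow> (nat \<Rightarrow> nat \<Rightarrow> 'c option) \<Rightarrow> (nat \<Rightarrow> nat \<Rightarrow> tern) \<Rightarrow> bool" where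
  "ocior_steps n F Enc winp ldr rbc a \<longleftrightarrow>
     (\<forall>i\<in>honest n F. ldr i = Enc (winp i) i) \<and>
     (\<forall>i\<in>honest n F. \<forall>j\<in>{1..n}. a i j =
        (case rbc i j of None \<Rightarrow> Bot
         | Some y \<Rightarrow> if y = Enc (winp i) j then T1 else T0))"

end

theory Submission
  imports Defs
begin

text \<open>An honest leader's RBC delivers its own symbol Enc_j(w) to every honest node, and an
  honest node with the same input computes the same symbol, so it sets its input entry j to 1.
  APVA validity lets a non-missing output entry only take a value some honest node input,
  hence entry j of the output is never 0.\<close>

lemma apva_output_entry_is_honest_input:
  assumes "apva_props n t F a out"
    and "i \<in> honest n F" and "out i = Some v"
    and "j \<in> {1..n}" and "v j \<noteq> Bot"
  shows "\<exists>k\<in>honest n F. a k j = v j"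
  using assms unfolding apva_props_def by blast

lemma ocior_input_honest_leader_same_message:
  assumes "rbc_props n F ldr rbc"
    and "ocior_steps n F Enc winp ldr rbc a"
    and "j \<in> honest n F" and "k \<in> honest n F"
    and "winp j = winp k"
  shows "a k j = T1"
proof -
  have delivered: "rbc k j = Some (ldr j)"
    using assms(1,3,4) unfolding rbc_props_def by blast
  have leader: "ldr j = Enc (winp j) j"
    using assms(2,3) unfolding ocior_steps_def by blast
  have "j \<in> {1..n}"
    using assms(3) by (simp add: honest_def)
  then have "a k j = (case rbc k j of None \<Rightarrow> Bot
      | Some y \<Rightarrow> if y = Enc (winp k) j then T1 else T0)"
    using assms(2,4) unfolding ocior_steps_def by blast
  then show ?thesis
    using delivered leader assms(5) by simp
qed

theorem lemma6:
  fixes n t :: nat and F :: "nat set"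
    and Enc :: "'m \<Rightarrow> nat \<Rightarrow> 'c" and Dec :: "nat set \<Rightarrow> (nat \<Rightarrow> 'c) \<Rightarrow> 'm"
    and winp :: "nat \<Rightarrow> 'm" and w :: 'm
    and ldr :: "nat \<Rightarrow> 'c" and rbc :: "nat \<Rightarrow> nat \<Rightarrow> 'c option"
    and a :: "nat \<Rightarrow> nat \<Rightarrow> tern" and out :: "nat \<Rightarrow> (nat \<Rightarrow> tern) option"
    and i0 :: nat and v :: "nat \<Rightarrow> tern"
  assumes "n \<ge> 3 * t + 1"
    and "F \<subseteq> {1..n}" and "card F \<le> t"
    and "erasure_code n t Enc Dec"
    and "rbc_props n F ldr rbc"
    and "apva_props n t F a out"
    and "ocior_steps n F Enc winp ldr rbc a"
    and "\<forall>i\<in>honest n F. winp i = w"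
    and "i0 \<in> honest n F" and "out i0 = Some v"
  shows "\<forall>j\<in>{1..n} - F. v j \<noteq> T0"
proof (intro ballI notI)
  fix j
  assume j: "j \<in> {1..n} - F" and zero: "v j = T0"
  have j_honest: "j \<in> honest n F"
    using j by (simp add: honest_def)
  obtain k where k: "k \<in> honest n F" and "a k j = T0"
    using apva_output_entry_is_honest_input[OF assms(6,9,10)] j zero by force
  moreover have "a k j = T1"
    using ocior_input_honest_leader_same_message[OF assms(5,7) j_honest k] assms(8) j_honest k
    by simp
  ultimately show False
    by simp
qed

end
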